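(* Let $\mathbf{P}=(X,P)$ be a finite interval order, and let $\mathbf{I}$ be a distinguishing interval representation of $\mathbf{P}$ in which every interval has length $1$ except for one interval, whose length is between $0$ and $2$ inclusive. Then $\dim(\mathbf{P})\le 3$.
   Context: An interval representation of a poset $(X,P)$ assigns to each $x\in X$ a closed real interval $[l_x,r_x]$ such that $x<y$ in $P$ iff $r_x<l_y$; the length is $r_x-l_x$. A representation is distinguishing if no two intervals share an endpoint. The dimension $\dim(\mathbf{P})$ is the minimum number of linear extensions of $P$ whose intersection is $P$. *)

theory Defs
  imports Complex_Main
begin

definition strict_poset :: "'a set \<Rightarrow> ('a \<times> 'a) set \<Rightarrow> bool" where
  "strict_poset X P \<longleftrightarrow> P \<subseteq> X \<times> X \<and> (\<forall>x\<in>X. (x, x) \<notin> P) \<and>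
     (\<forall>x\<in>X. \<forall>y\<in>X. \<forall>z\<in>X. (x, y) \<in> P \<longrightarrow> (y, z) \<in> P \<longrightarrow> (x, z) \<in> P)"

definition linear_extension :: "'a set \<Rightarrow> ('a \<times> 'a) set \<Rightarrow> ('a \<times> 'a) set \<Rightarrow> bool" where
  "linear_extension X P L \<longleftrightarrow> strict_poset X L \<and> P \<subseteq> L \<and>
     (\<forall>x\<in>X. \<forall>y\<in>X. x \<noteq> y \<longrightarrow> (x, y) \<in> L \<or> (y, x) \<in> L)"

definition realizer :: "'a set \<Rightarrow> ('a \<times> 'a) set \<Rightarrow> ('a \<times> 'a) set set \<Rightarrow> bool" where
  "realizer X P R \<longleftrightarrow> finite R \<and> R \<noteq> {} \<and> (\<forall>L\<in>R. linear_extension X P L) \<and> \<Inter> R = P"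

definition poset_dim :: "'a set \<Rightarrow> ('a \<times> 'a) set \<Rightarrow> nat" where
  "poset_dim X P = (LEAST t. \<exists>R. realizer X P R \<and> card R = t)"

definition interval_rep :: "'a set \<Rightarrow> ('a \<times> 'a) set \<Rightarrow> ('a \<Rightarrow> real) \<Rightarrow> ('a \<Rightarrow> real) \<Rightarrow> bool" where
  "interval_rep X P l r \<longleftrightarrow> (\<forall>x\<in>X. l x \<le> r x) \<and>
     (\<forall>x\<in>X. \<forall>y\<in>X. (x, y) \<in> P \<longleftrightarrow> r x < l y)"

definition distinguishing :: "'a set \<Rightarrow> ('a \<Rightarrow> real) \<Rightarrow> ('a \<Rightarrow> real) \<Rightarrow> bool" where
  "distinguishing X l r \<longleftrightarrow> (\<forall>x\<in>X. \<forall>y\<in>X. x \<noteq> y \<longrightarrow> {l x, r x} \<inter> {l y, r y} = {})"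

end

theory Submission
  imports Defs
begin

text \<open>
  Cut the line into unit blocks \<open>[r z + k, r z + k + 1)\<close> and sort every element other than
  \<open>z\<close> into the block containing its left endpoint. Two unit intervals whose left endpoints
  lie two or more blocks apart are comparable, so every incomparable pair lies in one block or
  in two adjacent ones. Three linear extensions reverse all such pairs: one lists the blocks
  upwards, each block by decreasing left endpoint, with \<open>z\<close> inserted just before block 0;
  the other two sort by an endpoint of each interval, the right one in blocks of one parity and
  the left one in the others, so that at each boundary between adjacent blocks one of them
  places the upper block first.
\<close>

definition score_order :: "'a set \<Rightarrow> ('a \<Rightarrow> real) \<Rightarrow> ('a \<times> 'a) set" where
  "score_order X g = {(x, y). x \<in> X \<and> y \<in> X \<and> g x < g y}"

lemma linear_extension_score_order:
  assumes "P \<subseteq> X \<times> X" and "inj_on g X"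
    and "\<And>x y. x \<in> X \<Longrightarrow> y \<in> X \<Longrightarrow> (x, y) \<in> P \<Longrightarrow> g x < g y"
  shows "linear_extension X P (score_order X g)"
  using assms unfolding linear_extension_def strict_poset_def score_order_def inj_on_def
  by (auto dest: neq_iff[THEN iffD1])

lemma poset_dim_le_card: "realizer X P R \<Longrightarrow> poset_dim X P \<le> card R"
  unfolding poset_dim_def by (rule Least_le) blast

lemma poset_dim_le_card_scores:
  fixes G :: "('a \<Rightarrow> real) set"
  assumes "P \<subseteq> X \<times> X" and "finite G" and "G \<noteq> {}"
    and inj: "\<And>g. g \<in> G \<Longrightarrow> inj_on g X"
    and mono: "\<And>g x y. g \<in> G \<Longrightarrow> x \<in> X \<Longrightarrow> y \<in> X \<Longrightarrow> (x, y) \<in> P \<Longrightarrow> g x < g y"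
    and reverse: "\<And>x y. x \<in> X \<Longrightarrow> y \<in> X \<Longrightarrow> x \<noteq> y \<Longrightarrow> (x, y) \<notin> P \<Longrightarrow> (y, x) \<notin> P \<Longrightarrow>
      \<exists>g\<in>G. g y < g x"
  shows "poset_dim X P \<le> card G"
proof -
  define R where "R = score_order X ` G"
  have "linear_extension X P (score_order X g)" if "g \<in> G" for g
    using assms(1) inj[OF that] mono[OF that] by (rule linear_extension_score_order)
  then have ext: "linear_extension X P L" if "L \<in> R" for L
    using that by (auto simp: R_def)
  have "\<Inter> R \<subseteq> P"
  proof
    fix p assume p: "p \<in> \<Inter> R"
    obtain x y where [simp]: "p = (x, y)" by fastforce
    obtain g0 where "g0 \<in> G" using \<open>G \<noteq> {}\<close> by blast
    with p have xy: "x \<in> X" "y \<in> X" and less: "\<And>g. g \<in> G \<Longrightarrow> g x < g y"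
      by (auto simp: R_def score_order_def)
    show "p \<in> P"
    proof (rule ccontr)
      assume "p \<notin> P"
      then have "(x, y) \<notin> P" by simp
      moreover have "x \<noteq> y" using less[OF \<open>g0 \<in> G\<close>] by auto
      moreover have "(y, x) \<notin> P" using mono[OF \<open>g0 \<in> G\<close> xy(2,1)] less[OF \<open>g0 \<in> G\<close>] by fastforce
      ultimately obtain g where "g \<in> G" "g y < g x" using reverse[OF xy] by blast
      then show False using less[of g] by simp
    qed
  qed
  moreover have "P \<subseteq> \<Inter> R" using ext by (auto simp: linear_extension_def)
  ultimately have "realizer X P R"
    using ext \<open>finite G\<close> \<open>G \<noteq> {}\<close> by (auto simp: realizer_def R_def)
  then have "poset_dim X P \<le> card R" by (rule poset_dim_le_card)
  also have "\<dots> \<le> card G" unfolding R_def using \<open>finite G\<close> by (rule card_image_le)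
  finally show ?thesis .
qed

lemma interval_rep_endpoint_score_mono:
  assumes "interval_rep X P l r" and "x \<in> X" "y \<in> X" "(x, y) \<in> P"
    and "\<And>u. g u = l u \<or> g u = r u"
  shows "g x < g y"
proof -
  have "r x < l y" "l x \<le> r x" "l y \<le> r y"
    using assms(1-4) unfolding interval_rep_def by auto
  then show ?thesis using assms(5)[of x] assms(5)[of y] by auto
qed

lemma distinguishing_endpoint_score_inj:
  assumes "distinguishing X l r" and "\<And>u. g u = l u \<or> g u = r u"
  shows "inj_on g X"
proof (rule inj_onI, rule ccontr)
  fix x y assume "x \<in> X" "y \<in> X" "g x = g y" "x \<noteq> y"
  then have "{l x, r x} \<inter> {l y, r y} = {}"
    using assms(1) by (simp add: distinguishing_def)
  then show False using assms(2)[of x] assms(2)[of y] \<open>g x = g y\<close> by auto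
qed

lemma overlap_of_not_less:
  assumes "interval_rep X P l r" "distinguishing X l r"
    and "x \<in> X" "y \<in> X" "x \<noteq> y" "(x, y) \<notin> P"
  shows "l y < r x"
proof -
  have "r x \<noteq> l y" using assms(2-5) unfolding distinguishing_def by blast
  then show ?thesis using assms(1,3,4,6) unfolding interval_rep_def by force
qed

locale unit_interval_rep_but_one =
  fixes X :: "'a set" and P :: "('a \<times> 'a) set" and l r :: "'a \<Rightarrow> real" and z :: 'a
  assumes rep: "interval_rep X P l r"
    and dist: "distinguishing X l r"
    and unit: "\<And>u. u \<in> X \<Longrightarrow> u \<noteq> z \<Longrightarrow> r u = l u + 1"
begin

definition block :: "'a \<Rightarrow> int" where
  "block u = \<lfloor>l u - r z\<rfloor>"

text \<open>Block \<open>k\<close> is sent into \<open>(2k - 1, 2k]\<close>, decreasing in the left endpoint; \<open>z\<close> goes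
  into the gap \<open>(-2, -1)\<close> between the images of blocks \<open>-1\<close> and \<open>0\<close>.\<close>
definition block_score :: "'a \<Rightarrow> real" where
  "block_score u = (if u = z then -3/2 else 2 * block u - frac (l u - r z))"

definition parity_score :: "int \<Rightarrow> 'a \<Rightarrow> real" where
  "parity_score p u = (if u \<noteq> z \<and> even (block u - p) then r u else l u)"

lemma lower_le_upper: "u \<in> X \<Longrightarrow> l u \<le> r u"
  using rep by (simp add: interval_rep_def)

lemma less_iff: "x \<in> X \<Longrightarrow> y \<in> X \<Longrightarrow> (x, y) \<in> P \<longleftrightarrow> r x < l y"
  using rep by (simp add: interval_rep_def)

lemma block_less:
  assumes "u \<in> X" "u \<noteq> z" "r u < l v"
  shows "block u < block v"
proof -
  have "\<lfloor>l u - r z\<rfloor> + 1 = \<lfloor>l u - r z + 1\<rfloor>" by simp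
  also have "\<dots> \<le> \<lfloor>l v - r z\<rfloor>" using assms unit by (intro floor_mono) force
  finally show ?thesis by (simp add: block_def)
qed

lemma block_le_succ:
  assumes "u \<in> X" "u \<noteq> z" "l v < r u"
  shows "block v \<le> block u + 1"
proof -
  have "\<lfloor>l v - r z\<rfloor> \<le> \<lfloor>l u - r z + 1\<rfloor>" using assms unit by (intro floor_mono) force
  then show ?thesis by (simp add: block_def)
qed

lemma block_nonneg_iff: "0 \<le> block u \<longleftrightarrow> r z \<le> l u"
  by (simp add: block_def)

lemma block_score_bounds:
  assumes "u \<noteq> z"
  shows "2 * of_int (block u) - 1 < block_score u" and "block_score u \<le> 2 * of_int (block u)"
  using assms frac_lt_1[of "l u - r z"] by (simp_all add: block_score_def)

lemma block_score_less_of_block_less: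
  assumes "u \<noteq> z" "v \<noteq> z" "block u < block v"
  shows "block_score u < block_score v"
proof -
  have "of_int (block u) + 1 \<le> (of_int (block v) :: real)"
    using assms(3) by linarith
  then show ?thesis using block_score_bounds[OF assms(1)] block_score_bounds[OF assms(2)] by linarith
qed

lemma block_score_same_block:
  "u \<noteq> z \<Longrightarrow> v \<noteq> z \<Longrightarrow> block u = block v \<Longrightarrow> block_score u < block_score v \<longleftrightarrow> l v < l u"
  by (simp add: block_score_def frac_def block_def)

lemma block_score_less_z_iff:
  assumes "u \<noteq> z"
  shows "block_score u < block_score z \<longleftrightarrow> l u < r z"
    and "block_score z < block_score u \<longleftrightarrow> r z \<le> l u"
proof -
  have z: "block_score z = -3/2" by (simp add: block_score_def)
  have "block_score z < block_score u" if "0 \<le> block u"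
    using that z block_score_bounds(1)[OF assms] by linarith
  moreover have "block_score u < block_score z" if "\<not> 0 \<le> block u"
    using that z block_score_bounds(2)[OF assms] by linarith
  ultimately show "block_score u < block_score z \<longleftrightarrow> l u < r z"
    and "block_score z < block_score u \<longleftrightarrow> r z \<le> l u"
    using block_nonneg_iff[of u] by (meson less_asym not_le)+
qed

lemma block_score_inj: "inj_on block_score X"
proof (rule inj_onI, rule ccontr)
  fix x y assume xy: "x \<in> X" "y \<in> X" "block_score x = block_score y" "x \<noteq> y"
  have "l x \<noteq> l y" using dist xy unfolding distinguishing_def by blast
  show False
  proof (cases "x = z \<or> y = z")
    case True
    with xy block_score_less_z_iff show False by (metis linorder_not_less less_irrefl)
  next
    case False
    then show False
      using xy \<open>l x \<noteq> l y\<close> block_score_less_of_block_less block_score_same_block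
      by (metis linorder_neqE less_irrefl)
  qed
qed

lemma block_score_mono:
  assumes "x \<in> X" "y \<in> X" "(x, y) \<in> P"
  shows "block_score x < block_score y"
proof -
  have rl: "r x < l y" using assms less_iff by blast
  have "x \<noteq> y" using rl lower_le_upper[OF \<open>x \<in> X\<close>] by auto
  consider (x_is_z) "x = z" | (y_is_z) "y = z" | (units) "x \<noteq> z" "y \<noteq> z" by blast
  then show ?thesis
  proof cases
    case x_is_z
    then show ?thesis using \<open>x \<noteq> y\<close> rl block_score_less_z_iff(2)[of y] by simp
  next
    case y_is_z
    have "l x < r z" using y_is_z rl lower_le_upper[OF assms(1)] lower_le_upper[OF assms(2)] by simp
    then show ?thesis using y_is_z \<open>x \<noteq> y\<close> block_score_less_z_iff(1)[of x] by simp
  next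
    case units
    then show ?thesis using block_less[OF \<open>x \<in> X\<close> _ rl] block_score_less_of_block_less by blast
  qed
qed

lemma parity_score_endpoint: "parity_score p u = l u \<or> parity_score p u = r u"
  by (simp add: parity_score_def)

lemma parity_score_mod_2: "parity_score (p mod 2) = parity_score p"
  by (rule ext) (simp add: parity_score_def)

lemma incomparable_reversed:
  assumes "x \<in> X" "y \<in> X" "x \<noteq> y" "(x, y) \<notin> P" "(y, x) \<notin> P"
  shows "block_score y < block_score x \<or> (\<exists>p. parity_score p y < parity_score p x)"
proof -
  have yx: "l y < r x" and xy: "l x < r y"
    using overlap_of_not_less[OF rep dist] assms by metis+
  have x_right: "parity_score (block x) x = r x" if "x \<noteq> z"
    using that by (simp add: parity_score_def)
  consider (x_is_z) "x = z" | (y_is_z) "y = z" | (units) "x \<noteq> z" "y \<noteq> z" by blast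
  then show ?thesis
  proof cases
    case x_is_z
    then show ?thesis using assms(3) yx block_score_less_z_iff(1)[of y] by simp
  next
    case y_is_z
    then have "parity_score (block x) y < parity_score (block x) x"
      using assms(3) x_right yx by (simp add: parity_score_def)
    then show ?thesis by blast
  next
    case units
    have "block y \<le> block x + 1" "block x \<le> block y + 1"
      using block_le_succ assms(1,2) units xy yx by blast+
    then consider (y_above) "block y = block x + 1" | (x_above) "block x = block y + 1"
      | (same) "block x = block y"
      by linarith
    then show ?thesis
    proof cases
      case y_above
      then have "parity_score (block x) y < parity_score (block x) x"
        using units x_right yx by (simp add: parity_score_def)
      then show ?thesis by blast
    next
      case x_above
      then show ?thesis using units block_score_less_of_block_less by simp
    next
      case same
      have "l x \<noteq> l y" using dist assms(1-3) unfolding distinguishing_def by blast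
      then consider (x_left) "l x < l y" | (y_left) "l y < l x" by linarith
      then show ?thesis
      proof cases
        case x_left
        then show ?thesis using units same block_score_same_block[of y x] by simp
      next
        case y_left
        then have "parity_score 0 y < parity_score 0 x"
          using units same unit assms(1,2) by (simp add: parity_score_def)
        then show ?thesis by blast
      qed
    qed
  qed
qed

theorem poset_dim_le_3:
  assumes "P \<subseteq> X \<times> X"
  shows "poset_dim X P \<le> 3"
proof -
  let ?G = "{block_score, parity_score 0, parity_score 1}"
  have "poset_dim X P \<le> card ?G"
  proof (rule poset_dim_le_card_scores[OF assms])
    fix g assume "g \<in> ?G"
    then have "g = block_score \<or> (\<exists>p. g = parity_score p)" by blast
    then show "inj_on g X"
      and "\<And>x y. x \<in> X \<Longrightarrow> y \<in> X \<Longrightarrow> (x, y) \<in> P \<Longrightarrow> g x < g y"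
      using block_score_inj block_score_mono parity_score_endpoint
        distinguishing_endpoint_score_inj[OF dist] interval_rep_endpoint_score_mono[OF rep]
      by blast+
  next
    fix x y assume "x \<in> X" "y \<in> X" "x \<noteq> y" "(x, y) \<notin> P" "(y, x) \<notin> P"
    then obtain p where "block_score y < block_score x \<or> parity_score p y < parity_score p x"
      using incomparable_reversed by blast
    moreover have "p mod 2 = 0 \<or> p mod 2 = 1" by presburger
    ultimately show "\<exists>g\<in>?G. g y < g x" using parity_score_mod_2[of p] by force
  qed auto
  also have "card ?G \<le> 3" by (simp add: card_insert_if)
  finally show ?thesis .
qed

end

theorem theorem7p1:
  fixes X :: "'a set" and P :: "('a \<times> 'a) set" and l r :: "'a \<Rightarrow> real" and z :: 'a
  assumes "finite X"
    and "strict_poset X P"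
    and "interval_rep X P l r"
    and "distinguishing X l r"
    and "z \<in> X" and "0 \<le> r z - l z" and "r z - l z \<le> 2"
    and "\<forall>x\<in>X. x \<noteq> z \<longrightarrow> r x - l x = 1"
  shows "poset_dim X P \<le> 3"
proof -
  interpret unit_interval_rep_but_one X P l r z
    using assms(3,4,8) by unfold_locales auto
  show ?thesis
    using assms(2) by (intro poset_dim_le_3) (simp add: strict_poset_def)
qed

end
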